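(* Let $G=(V,E)$ be a finite simple graph and $C\subseteq V$ such that no vertex of $V\setminus C$ is isolated in $G$, and let $m$ be a positive integer with $m\ge\gamma_{\rm gr}(G;C)$. Consider the integer program $F_1$ with binary variables $x_{vi},y_{vi}$ for $v\in V$, $i=1,\dots,m$ (and constants $x_{u0}=1$ for all $u\in V$): maximize $\sum_{i=1}^m\sum_{v\in V}y_{vi}$ subject to (a) $\sum_{v\in V}y_{vi}\le 1$ for all $i=1,\dots,m$; (b) $\sum_{i=1}^m y_{vi}\le 1$ for all $v\in V$; (c) $x_{ui}\le x_{u(i-1)}$ for all $u\in V$, $i=2,\dots,m$; (d) $x_{ui}+\sum_{v\in N\langle u\rangle}y_{vi}\le 1$ for all $u\in V$, $i=1,\dots,m$; (e) $y_{vi}\le\sum_{u\in N\langle v\rangle}(x_{u(i-1)}-x_{ui})$ for all $v\in V$, $i=2,\dots,m$; $x_{vi},y_{vi}\in\{0,1\}$. Then the optimal value of $F_1$ equals $\gamma_{\rm gr}(G;C)$.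
   Context: $N\langle v\rangle = N[v]$ (closed neighborhood) if $v\in C$ and $N\langle v\rangle=N(v)$ (open neighborhood) if $v\notin C$. A sequence $(v_1,\dots,v_k)$ of distinct vertices is legal if $N\langle v_i\rangle\setminus\bigcup_{j<i}N\langle v_j\rangle\neq\emptyset$ for all $i\ge 2$, and dominating if $\bigcup_j N\langle v_j\rangle=V$; $\gamma_{\rm gr}(G;C)$ is the maximum length of a legal dominating sequence of $G;C$. *)

theory Defs
  imports Main
begin

definition simple_graph :: "'a set \<Rightarrow> ('a \<Rightarrow> 'a \<Rightarrow> bool) \<Rightarrow> bool" where
  "simple_graph V E \<longleftrightarrow> finite V \<and> (\<forall>u v. E u v \<longrightarrow> u \<in> V \<and> v \<in> V)
     \<and> (\<forall>u v. E u v \<longrightarrow> E v u) \<and> (\<forall>v. \<not> E v v)"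

definition open_nbhd :: "'a set \<Rightarrow> ('a \<Rightarrow> 'a \<Rightarrow> bool) \<Rightarrow> 'a \<Rightarrow> 'a set" where
  "open_nbhd V E v = {u \<in> V. E v u}"

definition closed_nbhd :: "'a set \<Rightarrow> ('a \<Rightarrow> 'a \<Rightarrow> bool) \<Rightarrow> 'a \<Rightarrow> 'a set" where
  "closed_nbhd V E v = insert v (open_nbhd V E v)"

definition nbhdC :: "'a set \<Rightarrow> ('a \<Rightarrow> 'a \<Rightarrow> bool) \<Rightarrow> 'a set \<Rightarrow> 'a \<Rightarrow> 'a set" where
  "nbhdC V E C v = (if v \<in> C then closed_nbhd V E v else open_nbhd V E v)"

text \<open>Sequences are lists; position k (0-based) is the (k+1)-st vertex.\<close>
definition legal_seq :: "'a set \<Rightarrow> ('a \<Rightarrow> 'a \<Rightarrow> bool) \<Rightarrow> 'a set \<Rightarrow> 'a list \<Rightarrow> bool" where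
  "legal_seq V E C s \<longleftrightarrow> set s \<subseteq> V \<and> distinct s \<and>
     (\<forall>k. 1 \<le> k \<and> k < length s \<longrightarrow>
        nbhdC V E C (s ! k) - (\<Union>j<k. nbhdC V E C (s ! j)) \<noteq> {})"

definition dominating_seq :: "'a set \<Rightarrow> ('a \<Rightarrow> 'a \<Rightarrow> bool) \<Rightarrow> 'a set \<Rightarrow> 'a list \<Rightarrow> bool" where
  "dominating_seq V E C s \<longleftrightarrow> (\<Union>v\<in>set s. nbhdC V E C v) = V"

definition grundy_dom :: "'a set \<Rightarrow> ('a \<Rightarrow> 'a \<Rightarrow> bool) \<Rightarrow> 'a set \<Rightarrow> nat" where
  "grundy_dom V E C = Max {length s | s. legal_seq V E C s \<and> dominating_seq V E C s}"

text \<open>Feasibility for the integer program F1 (variables x v i, y v i for v in V, 1 <= i <= m;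
  the constants x u 0 = 1 are never used by constraints (c) and (e), which start at i = 2).\<close>
definition F1_feasible :: "'a set \<Rightarrow> ('a \<Rightarrow> 'a \<Rightarrow> bool) \<Rightarrow> 'a set \<Rightarrow> nat \<Rightarrow>
    ('a \<Rightarrow> nat \<Rightarrow> int) \<Rightarrow> ('a \<Rightarrow> nat \<Rightarrow> int) \<Rightarrow> bool" where
  "F1_feasible V E C m x y \<longleftrightarrow>
     (\<forall>i\<in>{1..m}. (\<Sum>v\<in>V. y v i) \<le> 1) \<and>
     (\<forall>v\<in>V. (\<Sum>i=1..m. y v i) \<le> 1) \<and>
     (\<forall>u\<in>V. \<forall>i\<in>{2..m}. x u i \<le> x u (i - 1)) \<and>
     (\<forall>u\<in>V. \<forall>i\<in>{1..m}. x u i + (\<Sum>v\<in>nbhdC V E C u. y v i) \<le> 1) \<and>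
     (\<forall>v\<in>V. \<forall>i\<in>{2..m}. y v i \<le> (\<Sum>u\<in>nbhdC V E C v. x u (i - 1) - x u i)) \<and>
     (\<forall>v\<in>V. \<forall>i\<in>{1..m}. x v i \<in> {0, 1} \<and> y v i \<in> {0, 1})"

definition F1_objective :: "'a set \<Rightarrow> nat \<Rightarrow> ('a \<Rightarrow> nat \<Rightarrow> int) \<Rightarrow> int" where
  "F1_objective V m y = (\<Sum>i=1..m. \<Sum>v\<in>V. y v i)"

end

theory Submission
  imports Defs
begin

(* A feasible solution of F1 is read as a sequence of chosen vertices: y v i = 1 says that v is
   chosen at step i (steps may stay idle), and x u i = 1 says that u is not yet dominated after
   step i. Constraint (d) forces x u i = 0 as soon as a neighbourhood containing u is chosen, while
   (e) asks the vertex chosen at a step i >= 2 to have a neighbour whose x-value drops at step i,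
   i.e. a neighbour not dominated before. Hence the chosen vertices, in order, form a legal
   sequence, and conversely every legal sequence of length at most m yields a feasible solution of
   the same value. Since no vertex outside C is isolated, every legal sequence extends to a legal
   dominating one, so the longest legal sequences have length gamma_gr(G;C). *)

lemma sum_01_eq_card:
  fixes f :: "'b \<Rightarrow> int"
  assumes "finite A" and "\<forall>a\<in>A. f a \<in> {0, 1}"
  shows "sum f A = int (card {a\<in>A. f a = 1})"
proof -
  have "sum f A = (\<Sum>a\<in>A. of_bool (f a = 1))"
    using assms(2) by (intro sum.cong) auto
  also have "\<dots> = int (card {a\<in>A. f a = 1})"
    using assms(1) by (simp add: sum_of_bool_eq Collect_conj_eq Int_commute)
  finally show ?thesis .
qed

lemma sum_01_le_1_iff:
  fixes f :: "'b \<Rightarrow> int"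
  assumes "finite A" and "\<forall>a\<in>A. f a \<in> {0, 1}"
  shows "sum f A \<le> 1 \<longleftrightarrow> (\<forall>a\<in>A. \<forall>b\<in>A. f a = 1 \<longrightarrow> f b = 1 \<longrightarrow> a = b)"
  using card_le_Suc0_iff_eq[of "{a\<in>A. f a = 1}"] assms by (auto simp: sum_01_eq_card)

lemma sum_01_eq_of_bool:
  fixes f :: "'b \<Rightarrow> int"
  assumes "finite A" and "\<forall>a\<in>A. f a \<in> {0, 1}" and "sum f A \<le> 1"
  shows "sum f A = of_bool (\<exists>a\<in>A. f a = 1)"
proof -
  have "card {a\<in>A. f a = 1} \<le> 1"
    using assms by (simp add: sum_01_eq_card)
  moreover have "card {a\<in>A. f a = 1} = 0 \<longleftrightarrow> \<not> (\<exists>a\<in>A. f a = 1)"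
    using assms(1) by auto
  ultimately have "card {a\<in>A. f a = 1} = of_bool (\<exists>a\<in>A. f a = 1)"
    by (cases "\<exists>a\<in>A. f a = 1") auto
  then show ?thesis
    using assms(1,2) by (simp add: sum_01_eq_card)
qed

lemma nbhdC_subset: "v \<in> V \<Longrightarrow> nbhdC V E C v \<subseteq> V"
  by (auto simp: nbhdC_def closed_nbhd_def open_nbhd_def)

lemma finite_nbhdC: "finite V \<Longrightarrow> finite (nbhdC V E C v)"
  by (simp add: nbhdC_def closed_nbhd_def open_nbhd_def)

lemma nbhdC_sym:
  assumes "simple_graph V E" and "u \<in> V" and "v \<in> V"
  shows "v \<in> nbhdC V E C u \<longleftrightarrow> u \<in> nbhdC V E C v"
  using assms by (auto simp: nbhdC_def closed_nbhd_def open_nbhd_def simple_graph_def)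

lemma nbhdC_cover:
  assumes "simple_graph V E" and "\<forall>v\<in>V - C. \<exists>u. E v u" and "w \<in> V"
  obtains v where "v \<in> V" and "w \<in> nbhdC V E C v"
proof (cases "w \<in> C")
  case True
  then show ?thesis
    using that[of w] assms(3) by (simp add: nbhdC_def closed_nbhd_def)
next
  case False
  then obtain u where "E w u"
    using assms(2,3) by blast
  then show ?thesis
    using that[of u] assms(1) by (auto simp: simple_graph_def nbhdC_def closed_nbhd_def open_nbhd_def)
qed

definition dominated_by :: "'a set \<Rightarrow> ('a \<Rightarrow> 'a \<Rightarrow> bool) \<Rightarrow> 'a set \<Rightarrow> 'a list \<Rightarrow> 'a set" where
  "dominated_by V E C vs = (\<Union>v\<in>set vs. nbhdC V E C v)"

lemma dominated_by_subset: "set vs \<subseteq> V \<Longrightarrow> dominated_by V E C vs \<subseteq> V"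
  by (auto simp: dominated_by_def nbhdC_def closed_nbhd_def open_nbhd_def)

lemma dominated_by_take:
  assumes "k \<le> length s"
  shows "(\<Union>j<k. nbhdC V E C (s ! j)) = dominated_by V E C (take k s)"
proof -
  have "set (take k s) = (!) s ` {..<k}"
    using nth_image[OF assms] by (simp add: atLeast0LessThan)
  then show ?thesis
    by (simp add: dominated_by_def)
qed

lemma legal_seq_iff:
  "legal_seq V E C s \<longleftrightarrow> set s \<subseteq> V \<and> distinct s \<and>
     (\<forall>k\<in>{1..<length s}. \<not> nbhdC V E C (s ! k) \<subseteq> dominated_by V E C (take k s))"
  unfolding legal_seq_def by (auto simp: dominated_by_take)

lemma legal_seq_length_le_card:
  "finite V \<Longrightarrow> legal_seq V E C s \<Longrightarrow> length s \<le> card V"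
  by (metis card_mono distinct_card legal_seq_def)

lemma legal_seq_snoc:
  assumes legal: "legal_seq V E C s" and "v \<in> V"
    and new: "\<not> nbhdC V E C v \<subseteq> dominated_by V E C s"
  shows "legal_seq V E C (s @ [v])"
proof -
  have "v \<notin> set s"
    using new by (auto simp: dominated_by_def)
  moreover have "\<not> nbhdC V E C ((s @ [v]) ! k) \<subseteq> dominated_by V E C (take k (s @ [v]))"
    if "k \<in> {1..<length (s @ [v])}" for k
  proof (cases "k = length s")
    case True
    then show ?thesis using new by simp
  next
    case False
    then show ?thesis
      using that legal by (simp add: legal_seq_iff nth_append)
  qed
  ultimately show ?thesis
    using legal \<open>v \<in> V\<close> by (simp add: legal_seq_iff)
qed

lemma legal_seq_extend_dominating:
  assumes graph: "simple_graph V E" and no_isolated: "\<forall>v\<in>V - C. \<exists>u. E v u"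
    and "legal_seq V E C s"
  shows "\<exists>t. legal_seq V E C t \<and> dominating_seq V E C t \<and> length s \<le> length t"
  using assms(3)
proof (induction "card V - length s" arbitrary: s rule: less_induct)
  case less
  show ?case
  proof (cases "dominating_seq V E C s")
    case True
    then show ?thesis using less.prems by blast
  next
    case False
    have fin: "finite V"
      using graph by (simp add: simple_graph_def)
    have "dominated_by V E C s \<subseteq> V"
      using less.prems by (simp add: legal_seq_def dominated_by_subset)
    with False obtain w where "w \<in> V" and w: "w \<notin> dominated_by V E C s"
      by (auto simp: dominating_seq_def dominated_by_def)
    then obtain v where "v \<in> V" and "w \<in> nbhdC V E C v"
      using nbhdC_cover[OF graph no_isolated] by blast
    then have legal': "legal_seq V E C (s @ [v])"
      using less.prems w by (blast intro: legal_seq_snoc)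
    have "length (s @ [v]) \<le> card V"
      using fin legal' by (rule legal_seq_length_le_card)
    then have "card V - length (s @ [v]) < card V - length s"
      by simp
    from less.hyps[OF this legal'] show ?thesis
      by fastforce
  qed
qed

lemma finite_legal_dominating_lengths:
  "finite V \<Longrightarrow> finite {length s | s. legal_seq V E C s \<and> dominating_seq V E C s}"
  by (rule finite_subset[of _ "{..card V}"]) (auto dest: legal_seq_length_le_card)

lemma grundy_dom_attained:
  assumes graph: "simple_graph V E" and no_isolated: "\<forall>v\<in>V - C. \<exists>u. E v u"
  obtains s where "legal_seq V E C s" and "dominating_seq V E C s"
    and "length s = grundy_dom V E C"
proof -
  let ?S = "{length s | s. legal_seq V E C s \<and> dominating_seq V E C s}"
  have "legal_seq V E C []"
    by (simp add: legal_seq_def)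
  then have "?S \<noteq> {}"
    using legal_seq_extend_dominating[OF graph no_isolated] by blast
  moreover have "finite ?S"
    using graph by (simp add: simple_graph_def finite_legal_dominating_lengths)
  ultimately have "grundy_dom V E C \<in> ?S"
    unfolding grundy_dom_def by (rule Max_in[rotated])
  then show ?thesis
    using that by auto
qed

lemma legal_seq_length_le_grundy_dom:
  assumes graph: "simple_graph V E" and no_isolated: "\<forall>v\<in>V - C. \<exists>u. E v u"
    and "legal_seq V E C s"
  shows "length s \<le> grundy_dom V E C"
proof -
  let ?S = "{length s | s. legal_seq V E C s \<and> dominating_seq V E C s}"
  obtain t where "legal_seq V E C t" "dominating_seq V E C t" and "length s \<le> length t"
    using legal_seq_extend_dominating[OF assms] by blast
  moreover have "finite ?S"
    using graph by (simp add: simple_graph_def finite_legal_dominating_lengths)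
  ultimately have "length s \<le> Max ?S"
    by (blast intro: Max_ge le_trans)
  then show ?thesis
    by (simp add: grundy_dom_def)
qed

locale legal_sequence =
  fixes V :: "'a set" and E :: "'a \<Rightarrow> 'a \<Rightarrow> bool" and C :: "'a set" and s :: "'a list"
  assumes graph: "simple_graph V E" and legal: "legal_seq V E C s"
begin

definition undominated :: "'a \<Rightarrow> nat \<Rightarrow> int" where
  "undominated u i = of_bool (u \<notin> dominated_by V E C (take i s))"

definition picked :: "'a \<Rightarrow> nat \<Rightarrow> int" where
  "picked v i = of_bool (i \<in> {1..length s} \<and> s ! (i - 1) = v)"

lemma finite_V: "finite V"
  using graph by (simp add: simple_graph_def)

lemma set_subset_V: "set s \<subseteq> V"
  using legal by (simp add: legal_seq_def)

lemma undominated_antimono: "i \<le> j \<Longrightarrow> undominated u j \<le> undominated u i"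
  using set_take_subset_set_take[of i j s] by (auto simp: undominated_def dominated_by_def)

lemma picked_step_sum: "(\<Sum>v\<in>V. picked v i) = of_bool (i \<in> {1..length s})"
proof (cases "i \<in> {1..length s}")
  case True
  then have "s ! (i - 1) \<in> V"
    using set_subset_V by (auto intro: nth_mem)
  moreover have "picked v i = (if v = s ! (i - 1) then 1 else 0)" for v
    using True by (auto simp: picked_def)
  ultimately show ?thesis
    using True finite_V by simp
next
  case False
  then have "picked v i = 0" for v
    by (auto simp: picked_def)
  then show ?thesis
    using False by simp
qed

lemma picked_vertex_sum: "(\<Sum>i=1..m. picked v i) \<le> 1"
proof (subst sum_01_le_1_iff, safe)
  fix i j assume "i \<in> {1..m}" "j \<in> {1..m}" "picked v i = 1" "picked v j = 1"
  then have "i - 1 < length s" "j - 1 < length s" "s ! (i - 1) = s ! (j - 1)"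
    by (auto simp: picked_def)
  then show "i = j"
    using \<open>i \<in> {1..m}\<close> \<open>j \<in> {1..m}\<close> legal nth_eq_iff_index_eq
    by (fastforce simp: legal_seq_def)
qed (auto simp: picked_def)

lemma picked_dominated:
  assumes "picked v i = 1"
  shows "nbhdC V E C v \<subseteq> dominated_by V E C (take i s)"
proof -
  have "i \<in> {1..length s}" and v: "v = take i s ! (i - 1)"
    using assms by (auto simp: picked_def)
  then have "v \<in> set (take i s)"
    by (auto simp: in_set_conv_nth intro!: exI[of _ "i - 1"])
  then show ?thesis
    by (auto simp: dominated_by_def)
qed

lemma undominated_plus_picked_le_1:
  assumes "u \<in> V"
  shows "undominated u i + (\<Sum>v\<in>nbhdC V E C u. picked v i) \<le> 1"
proof (cases "u \<in> dominated_by V E C (take i s)")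
  case True
  have "(\<Sum>v\<in>nbhdC V E C u. picked v i) \<le> (\<Sum>v\<in>V. picked v i)"
    using finite_V nbhdC_subset[OF assms] by (intro sum_mono2) (auto simp: picked_def)
  also have "\<dots> \<le> 1"
    by (simp add: picked_step_sum)
  finally show ?thesis
    using True by (simp add: undominated_def)
next
  case False
  have "picked v i = 0" if "v \<in> nbhdC V E C u" for v
  proof (rule ccontr)
    assume "picked v i \<noteq> 0"
    then have "picked v i = 1"
      by (simp add: picked_def)
    moreover have "u \<in> nbhdC V E C v"
      using that nbhdC_sym[OF graph assms] nbhdC_subset[OF assms] by blast
    ultimately show False
      using False picked_dominated by blast
  qed
  then show ?thesis
    by (simp add: undominated_def)
qed

lemma picked_le_newly_dominated:
  assumes "v \<in> V" and "2 \<le> i"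
  shows "picked v i \<le> (\<Sum>u\<in>nbhdC V E C v. undominated u (i - 1) - undominated u i)"
proof -
  have nonneg: "\<forall>u\<in>nbhdC V E C v. 0 \<le> undominated u (i - 1) - undominated u i"
    using undominated_antimono[of "i - 1" i] by simp
  show ?thesis
  proof (cases "picked v i = 1")
    case True
    then have "i - 1 \<in> {1..<length s}" and v: "v = s ! (i - 1)"
      using assms(2) by (auto simp: picked_def)
    then have "\<not> nbhdC V E C v \<subseteq> dominated_by V E C (take (i - 1) s)"
      using legal by (simp add: legal_seq_iff)
    then obtain u where u: "u \<in> nbhdC V E C v" and "u \<notin> dominated_by V E C (take (i - 1) s)"
      by blast
    moreover have "u \<in> dominated_by V E C (take i s)"
      using picked_dominated[OF True] u by blast
    ultimately have "undominated u (i - 1) - undominated u i = 1"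
      by (simp add: undominated_def)
    moreover have "undominated u (i - 1) - undominated u i
        \<le> (\<Sum>u\<in>nbhdC V E C v. undominated u (i - 1) - undominated u i)"
      by (rule member_le_sum[OF u]) (use nonneg finite_nbhdC[OF finite_V] in auto)
    ultimately show ?thesis
      using True by simp
  next
    case False
    then have "picked v i = 0"
      by (simp add: picked_def)
    then show ?thesis
      using nonneg by (simp add: sum_nonneg)
  qed
qed

lemma F1_feasible_undominated_picked:
  "F1_feasible V E C m undominated picked"
  unfolding F1_feasible_def
proof (intro conjI ballI)
  fix i :: nat
  show "(\<Sum>v\<in>V. picked v i) \<le> 1"
    by (simp add: picked_step_sum)
next
  fix u :: 'a and i :: nat assume "i \<in> {2..m}"
  then show "undominated u i \<le> undominated u (i - 1)"
    by (simp add: undominated_antimono)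
next
  fix v :: 'a and i :: nat assume "v \<in> V" and "i \<in> {2..m}"
  then show "picked v i \<le> (\<Sum>u\<in>nbhdC V E C v. undominated u (i - 1) - undominated u i)"
    by (intro picked_le_newly_dominated) auto
next
  fix v :: 'a
  show "(\<Sum>i=1..m. picked v i) \<le> 1"
    by (rule picked_vertex_sum)
next
  fix u :: 'a and i :: nat assume "u \<in> V"
  then show "undominated u i + (\<Sum>v\<in>nbhdC V E C u. picked v i) \<le> 1"
    by (rule undominated_plus_picked_le_1)
qed (simp_all add: undominated_def picked_def)

lemma F1_objective_picked:
  assumes "length s \<le> m"
  shows "F1_objective V m picked = int (length s)"
proof -
  have "F1_objective V m picked = (\<Sum>i=1..m. of_bool (i \<in> {1..length s}))"
    by (simp add: F1_objective_def picked_step_sum)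
  also have "\<dots> = int (card ({1..m} \<inter> {i. i \<in> {1..length s}}))"
    by (rule sum_of_bool_eq) simp_all
  also have "{1..m} \<inter> {i. i \<in> {1..length s}} = {1..length s}"
    using assms by auto
  finally show ?thesis
    by simp
qed

end

locale F1_solution =
  fixes V :: "'a set" and E :: "'a \<Rightarrow> 'a \<Rightarrow> bool" and C :: "'a set" and m :: nat
    and x y :: "'a \<Rightarrow> nat \<Rightarrow> int"
  assumes graph: "simple_graph V E" and feasible: "F1_feasible V E C m x y"
begin

lemma finite_V: "finite V"
  using graph by (simp add: simple_graph_def)

lemma
  shows step_sum_le_1: "i \<in> {1..m} \<Longrightarrow> (\<Sum>v\<in>V. y v i) \<le> 1"
    and vertex_sum_le_1: "v \<in> V \<Longrightarrow> (\<Sum>i=1..m. y v i) \<le> 1"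
    and x_step_antimono: "u \<in> V \<Longrightarrow> i \<in> {2..m} \<Longrightarrow> x u i \<le> x u (i - 1)"
    and x_plus_y_le_1: "u \<in> V \<Longrightarrow> i \<in> {1..m} \<Longrightarrow> x u i + (\<Sum>v\<in>nbhdC V E C u. y v i) \<le> 1"
    and y_le_newly_dominated:
      "v \<in> V \<Longrightarrow> i \<in> {2..m} \<Longrightarrow> y v i \<le> (\<Sum>u\<in>nbhdC V E C v. x u (i - 1) - x u i)"
    and x_01: "v \<in> V \<Longrightarrow> i \<in> {1..m} \<Longrightarrow> x v i \<in> {0, 1}"
    and y_01: "v \<in> V \<Longrightarrow> i \<in> {1..m} \<Longrightarrow> y v i \<in> {0, 1}"
  using feasible unfolding F1_feasible_def by blast+

lemma x_antimono:
  assumes "u \<in> V" and "1 \<le> i" and "i \<le> j" and "j \<le> m"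
  shows "x u j \<le> x u i"
  using assms(3,4)
proof (induction j rule: dec_induct)
  case (step j)
  then have "x u (Suc j) \<le> x u j"
    using x_step_antimono[OF assms(1), of "Suc j"] assms(2) by simp
  with step show ?case
    by simp
qed simp

definition steps :: "nat set" where
  "steps = {i\<in>{1..m}. \<exists>v\<in>V. y v i = 1}"

definition choice :: "nat \<Rightarrow> 'a" where
  "choice i = (THE v. v \<in> V \<and> y v i = 1)"

lemma step_unique:
  assumes "i \<in> {1..m}" and "v \<in> V" and "w \<in> V" and "y v i = 1" and "y w i = 1"
  shows "v = w"
proof -
  have "\<forall>a\<in>V. y a i \<in> {0, 1}"
    using y_01 assms(1) by blast
  with step_sum_le_1[OF assms(1)] show ?thesis
    using assms(2-5) by (simp add: sum_01_le_1_iff[OF finite_V])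
qed

lemma choice:
  assumes "i \<in> steps"
  shows "choice i \<in> V" and "y (choice i) i = 1"
proof -
  obtain v where "v \<in> V" "y v i = 1" and "i \<in> {1..m}"
    using assms by (auto simp: steps_def)
  then have "choice i = v"
    unfolding choice_def by (blast intro: the_equality step_unique)
  with \<open>v \<in> V\<close> \<open>y v i = 1\<close> show "choice i \<in> V" and "y (choice i) i = 1"
    by simp_all
qed

lemma inj_on_choice: "inj_on choice steps"
proof (rule inj_onI)
  fix i j assume "i \<in> steps" "j \<in> steps" "choice i = choice j"
  moreover have "\<forall>k\<in>{1..m}. y (choice i) k \<in> {0, 1}"
    using choice(1)[OF \<open>i \<in> steps\<close>] y_01 by blast
  ultimately show "i = j"
    using vertex_sum_le_1[OF choice(1)] choice(2) sum_01_le_1_iff[of "{1..m}"]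
    by (metis (no_types, lifting) finite_atLeastAtMost mem_Collect_eq steps_def)
qed

lemma objective_eq_card_steps: "F1_objective V m y = int (card steps)"
proof -
  have "(\<Sum>v\<in>V. y v i) = of_bool (i \<in> steps)" if "i \<in> {1..m}" for i
    using sum_01_eq_of_bool[OF finite_V] y_01 step_sum_le_1 that by (simp add: steps_def)
  then have "F1_objective V m y = (\<Sum>i=1..m. of_bool (i \<in> steps))"
    unfolding F1_objective_def by (rule sum.cong[OF refl])
  also have "\<dots> = int (card ({1..m} \<inter> {i. i \<in> steps}))"
    by (rule sum_of_bool_eq) simp_all
  also have "{1..m} \<inter> {i. i \<in> steps} = steps"
    by (auto simp: steps_def)
  finally show ?thesis .
qed

text \<open>Constraint (e) yields a neighbour u that becomes dominated exactly at step i; as x u stays 1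
  before step i, constraint (d) keeps it out of the neighbourhoods chosen earlier.\<close>
lemma private_neighbour:
  assumes i: "i \<in> steps" and "2 \<le> i"
  obtains u where "u \<in> nbhdC V E C (choice i)"
    and "\<And>j. j \<in> steps \<Longrightarrow> j < i \<Longrightarrow> u \<notin> nbhdC V E C (choice j)"
proof -
  let ?v = "choice i"
  have i2: "i \<in> {2..m}"
    using i \<open>2 \<le> i\<close> by (simp add: steps_def)
  have sum_pos: "1 \<le> (\<Sum>u\<in>nbhdC V E C ?v. x u (i - 1) - x u i)"
    using y_le_newly_dominated[OF choice(1)[OF i] i2] choice(2)[OF i] by simp
  have "\<exists>u\<in>nbhdC V E C ?v. 0 < x u (i - 1) - x u i"
  proof (rule ccontr)
    assume "\<not> ?thesis"
    then have "(\<Sum>u\<in>nbhdC V E C ?v. x u (i - 1) - x u i) \<le> 0"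
      by (intro sum_nonpos) (simp add: not_less)
    with sum_pos show False
      by simp
  qed
  then obtain u where u: "u \<in> nbhdC V E C ?v" and "0 < x u (i - 1) - x u i"
    by blast
  moreover have uV: "u \<in> V"
    using u nbhdC_subset[OF choice(1)[OF i]] by blast
  moreover have "i - 1 \<in> {1..m}" and "i \<in> {1..m}"
    using i2 by auto
  then have "x u (i - 1) \<in> {0, 1}" and "x u i \<in> {0, 1}"
    using x_01[OF uV] by blast+
  ultimately have xu: "x u (i - 1) = 1"
    by auto
  have "u \<notin> nbhdC V E C (choice j)" if j: "j \<in> steps" "j < i" for j
  proof
    assume "u \<in> nbhdC V E C (choice j)"
    then have w: "choice j \<in> nbhdC V E C u"
      using nbhdC_sym[OF graph uV choice(1)[OF j(1)]] by blast
    have j1: "j \<in> {1..m}"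
      using j(1) by (simp add: steps_def)
    have "x u (i - 1) \<le> x u j"
      using x_antimono[OF uV] j1 j(2) i2 by simp
    then have "x u j = 1"
      using xu x_01[OF uV j1] by auto
    moreover have "\<forall>v\<in>nbhdC V E C u. 0 \<le> y v j"
      using nbhdC_subset[OF uV] y_01 j1 by fastforce
    then have "y (choice j) j \<le> (\<Sum>v\<in>nbhdC V E C u. y v j)"
      using w finite_nbhdC[OF finite_V] by (intro member_le_sum) auto
    ultimately show False
      using x_plus_y_le_1[OF uV j1] choice(2)[OF j(1)] by simp
  qed
  then show ?thesis
    using that u by blast
qed

definition chosen_seq :: "'a list" where
  "chosen_seq = map choice (sorted_list_of_set steps)"

lemma length_chosen_seq: "length chosen_seq = card steps"
  by (simp add: chosen_seq_def)

lemma legal_chosen_seq: "legal_seq V E C chosen_seq"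
  unfolding legal_seq_def
proof (intro conjI allI impI)
  let ?L = "sorted_list_of_set steps"
  have fin: "finite steps"
    by (simp add: steps_def)
  have set_L: "set ?L = steps"
    using fin by simp
  show "set chosen_seq \<subseteq> V"
    using choice(1) by (auto simp: chosen_seq_def set_L)
  show "distinct chosen_seq"
    using inj_on_choice by (simp add: chosen_seq_def distinct_map set_L)
  fix k assume k: "1 \<le> k \<and> k < length chosen_seq"
  then have kL: "k < length ?L"
    by (simp add: chosen_seq_def)
  have L_less: "?L ! j < ?L ! k" if "j < k" for j
    using that kL strict_sorted_list_of_set[of steps] by (simp add: sorted_wrt_iff_nth_less)
  have L_steps: "?L ! j \<in> steps" if "j \<le> k" for j
    using that kL set_L nth_mem by (metis le_less_trans)
  have "1 \<le> ?L ! 0"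
    using L_steps[of 0] by (simp add: steps_def)
  then have "2 \<le> ?L ! k"
    using L_less[of 0] k by simp
  then obtain u where "u \<in> nbhdC V E C (choice (?L ! k))"
    and "\<And>j. j \<in> steps \<Longrightarrow> j < ?L ! k \<Longrightarrow> u \<notin> nbhdC V E C (choice j)"
    using private_neighbour L_steps[of k] by blast
  then have "u \<in> nbhdC V E C (chosen_seq ! k) - (\<Union>j<k. nbhdC V E C (chosen_seq ! j))"
    using kL L_less L_steps by (auto simp: chosen_seq_def)
  then show "nbhdC V E C (chosen_seq ! k) - (\<Union>j<k. nbhdC V E C (chosen_seq ! j)) \<noteq> {}"
    by blast
qed

end

theorem theorem1:
  fixes V :: "'a set" and E :: "'a \<Rightarrow> 'a \<Rightarrow> bool" and C :: "'a set" and m :: nat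
  assumes "simple_graph V E"
    and "C \<subseteq> V"
    and "\<forall>v\<in>V - C. \<exists>u. E v u"
    and "m \<ge> 1"
    and "m \<ge> grundy_dom V E C"
  shows "(\<exists>x y. F1_feasible V E C m x y \<and> F1_objective V m y = int (grundy_dom V E C))
       \<and> (\<forall>x y. F1_feasible V E C m x y \<longrightarrow> F1_objective V m y \<le> int (grundy_dom V E C))"
proof (intro conjI allI impI)
  obtain s where s: "legal_seq V E C s" and length_s: "length s = grundy_dom V E C"
    using grundy_dom_attained[OF assms(1,3)] by blast
  interpret lower: legal_sequence V E C s
    using assms(1) s by unfold_locales
  show "\<exists>x y. F1_feasible V E C m x y \<and> F1_objective V m y = int (grundy_dom V E C)"
    using lower.F1_feasible_undominated_picked lower.F1_objective_picked length_s assms(5)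
    by metis
next
  fix x y assume "F1_feasible V E C m x y"
  then interpret upper: F1_solution V E C m x y
    using assms(1) by unfold_locales
  have "F1_objective V m y = int (length upper.chosen_seq)"
    by (simp add: upper.objective_eq_card_steps upper.length_chosen_seq)
  also have "\<dots> \<le> int (grundy_dom V E C)"
    using legal_seq_length_le_grundy_dom[OF assms(1,3) upper.legal_chosen_seq] by simp
  finally show "F1_objective V m y \<le> int (grundy_dom V E C)" .
qed

end
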